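(* Let $a,q$ be positive integers with $q\ne1$ and $(a,q)=1$. Let $U=2^J\cdot3^3$ with $5\le J\ll1$ and $W=U\prod_{5\le p\le w}p$ with $10^{10^{10}}\le w\ll1$, and let $Wn+b$ be amenable. Let $V\ge1$ be an integer with $(q,V)=1$. Then $$\Bigg|\sum_{\substack{n\bmod q\\(WVn+b,q)=1\\(WVn+b-1,s(q))=1}}e\Big(\frac aqn\Big)\Bigg|\le\tau(q)\cdot1_{(q,W)=1}.$$
   Context: $e(t)=e^{2\pi it}$, $\tau$ is the divisor function. $s(n)=\prod_{p\mid n,\ p\equiv-1\ (4),\ p\ne3}p$. A linear polynomial $Kn+b$ ($K\ge1$) is amenable if (i) $6^3\mid K$; (ii) $(b,K)=(b-1,s(K))=1$; (iii) $b-1=2^j3^{2t}(4h+1)$ for some $h\in\mathbb{Z}$ with $3\nmid4h+1$ and $j,t\ge0$ with $2^{j+2}3^{2t+1}\mid K$. *)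

theory Defs
  imports "HOL-Analysis.Analysis" "HOL-Computational_Algebra.Primes"
begin

definition e :: "real \<Rightarrow> complex" where
  "e t = exp (2 * pi * \<i> * complex_of_real t)"

definition divisor_count :: "nat \<Rightarrow> nat" where
  "divisor_count n = card {d. d dvd n}"

definition s_fun :: "nat \<Rightarrow> nat" where
  "s_fun n = (\<Prod>p\<in>{p. prime p \<and> p dvd n \<and> p mod 4 = 3 \<and> p \<noteq> 3}. p)"

definition amenable :: "int \<Rightarrow> int \<Rightarrow> bool" where
  "amenable K b \<longleftrightarrow> K \<ge> 1 \<and> 6^3 dvd K \<and> coprime b K \<and>
     coprime (b - 1) (int (s_fun (nat K))) \<and>
     (\<exists>h::int. \<exists>j t::nat. b - 1 = 2^j * 3^(2*t) * (4*h+1) \<and> \<not> 3 dvd (4*h+1)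
        \<and> 2^(j+2) * 3^(2*t+1) dvd K)"

end

theory Submission
  imports Defs
begin

(*
  Expand both coprimality conditions by inclusion-exclusion over pairs (A, B) of sets of primes
  dividing q, the primes of A required to divide WVn + b and those of B to divide WVn + b - 1.
  A sum of e(an/q) against a weight whose period L is a proper divisor of q vanishes, because
  shifting n by L multiplies it by e(aL/q) \<noteq> 1. If (q, W) > 1, the whole weight has period
  q / (WV, q), so the sum is 0. If (q, W) = 1, the term of (A, B) has period \<Prod>(A \<union> B) and
  vanishes unless A and B are disjoint with \<Prod>(A \<union> B) = q; then WV is invertible modulo q and at
  most one residue n survives. Such a pair is determined by the divisor \<Prod>A of q, which leaves at
  most \<tau>(q) terms of absolute value at most 1.
*)

lemma e_add: "e (x + y) = e x * e y"
  unfolding e_def by (simp add: distrib_left exp_add)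

lemma e_of_int [simp]: "e (real_of_int k) = 1"
proof -
  have "2 * complex_of_real pi * \<i> * complex_of_real (real_of_int k) = (2 * of_int k * pi) * \<i>"
    by simp
  then show ?thesis
    unfolding e_def using exp_integer_2pi[of "of_int k"] by (simp add: mult_ac)
qed

lemma e_eq_1_imp_int:
  assumes "e t = 1"
  obtains k :: int where "t = of_int k"
proof -
  from assms obtain n :: int where "Im (2 * pi * \<i> * complex_of_real t) = of_int (2 * n) * pi"
    unfolding e_def exp_eq_1 by blast
  then have "t = of_int n" by simp
  then show thesis by (rule that)
qed

lemma norm_e [simp]: "norm (e t) = 1"
proof -
  have "e t = exp (\<i> * of_real (2 * pi * t))" unfolding e_def by (simp add: mult_ac)
  then show ?thesis by simp
qed

lemma sum_atLeastLessThan_int_shift_1_periodic: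
  fixes g :: "int \<Rightarrow> 'a::comm_monoid_add" and q :: int
  assumes g_periodic: "\<And>n. g (n + q) = g n"
  shows "(\<Sum>n\<in>{0..<q}. g (n + 1)) = (\<Sum>n\<in>{0..<q}. g n)"
proof (cases "q > 0")
  case True
  have "(\<Sum>n\<in>{0..<q}. g (n + 1)) = (\<Sum>n\<in>{1..<q+1}. g n)"
    by (rule sum.reindex_bij_witness[of _ "\<lambda>n. n - 1" "\<lambda>n. n + 1"]) auto
  also have "{1..<q+1} = insert q {1..<q}" using True by auto
  also have "(\<Sum>n\<in>insert q {1..<q}. g n) = g 0 + (\<Sum>n\<in>{1..<q}. g n)"
    using g_periodic[of 0] by simp
  also have "\<dots> = (\<Sum>n\<in>insert 0 {1..<q}. g n)" by simp
  also have "insert 0 {1..<q} = {0..<q}" using True by auto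
  finally show ?thesis .
qed simp

lemma sum_atLeastLessThan_int_shift_periodic:
  fixes h :: "int \<Rightarrow> 'a::comm_monoid_add" and q :: int
  assumes "\<And>n. h (n + q) = h n"
  shows "(\<Sum>n\<in>{0..<q}. h (n + int k)) = (\<Sum>n\<in>{0..<q}. h n)"
proof (induction k)
  case (Suc k)
  have "(\<Sum>n\<in>{0..<q}. h (n + int (Suc k))) = (\<Sum>n\<in>{0..<q}. h (n + 1 + int k))"
    by (simp add: algebra_simps)
  also have "\<dots> = (\<Sum>n\<in>{0..<q}. h (n + int k))"
    by (rule sum_atLeastLessThan_int_shift_1_periodic[of "\<lambda>n. h (n + int k)"])
       (metis add.commute add.left_commute assms)
  finally show ?case using Suc by simp
qed simp

lemma exp_sum_eq_0_if_shorter_period: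
  fixes g :: "int \<Rightarrow> complex" and \<alpha> q L :: int
  assumes "0 < L" "L < q" "L dvd q" "coprime \<alpha> q" and g_periodic: "\<And>n. g (n + L) = g n"
  shows "(\<Sum>n\<in>{0..<q}. g n * e (\<alpha> / q * n)) = 0"
proof -
  define h where "h n = g n * e (\<alpha> / q * n)" for n
  define \<zeta> where "\<zeta> = e (\<alpha> / q * L)"
  have q_nz: "real_of_int q \<noteq> 0" using assms(1,2) by simp
  obtain k' where "q = L * k'" using assms(3) by blast
  moreover have "k' > 0" using calculation assms(1,2) by (simp add: zero_less_mult_iff)
  ultimately obtain k where q_eq: "q = L * int k" by (metis pos_int_cases)
  have g_q_periodic: "g (n + L * int j) = g n" for n j
  proof (induction j)
    case (Suc j)
    then show ?case using g_periodic[of "n + L * int j"] by (simp add: algebra_simps)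
  qed simp
  have h_q_periodic: "h (n + q) = h n" for n
  proof -
    have "\<alpha> / q * (n + q) = \<alpha> / q * n + \<alpha>" using q_nz by (simp add: field_simps)
    then show ?thesis unfolding h_def using g_q_periodic[of n k] by (simp add: q_eq e_add)
  qed
  have h_shift: "h (n + L) = \<zeta> * h n" for n
  proof -
    have "\<alpha> / q * (n + L) = \<alpha> / q * n + \<alpha> / q * L" by (simp add: distrib_left)
    then show ?thesis unfolding h_def \<zeta>_def by (simp add: g_periodic e_add)
  qed
  have "(\<Sum>n\<in>{0..<q}. h n) = (\<Sum>n\<in>{0..<q}. h (n + int (nat L)))"
    by (rule sum_atLeastLessThan_int_shift_periodic[symmetric]) (rule h_q_periodic)
  also have "\<dots> = \<zeta> * (\<Sum>n\<in>{0..<q}. h n)"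
    using assms(1) by (simp add: h_shift sum_distrib_left)
  finally have "(1 - \<zeta>) * (\<Sum>n\<in>{0..<q}. h n) = 0" by (simp add: algebra_simps)
  moreover have "\<zeta> \<noteq> 1"
  proof
    assume "\<zeta> = 1"
    then obtain m :: int where "\<alpha> / q * L = m"
      unfolding \<zeta>_def by (rule e_eq_1_imp_int)
    then have "real_of_int (\<alpha> * L) = real_of_int (m * q)" using q_nz by (simp add: field_simps)
    then have "q dvd \<alpha> * L" by (metis dvd_triv_right of_int_eq_iff)
    then have "q dvd L" using assms(4) by (simp add: coprime_commute coprime_dvd_mult_right_iff)
    then show False using assms(1,2) by (meson zdvd_imp_le not_le)
  qed
  ultimately show ?thesis by (simp add: h_def)
qed

lemma exp_sum_eq_0_if_not_coprime:
  fixes f :: "int \<Rightarrow> complex" and \<alpha> c q :: int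
  assumes "q > 0" "coprime \<alpha> q" "\<not> coprime c q" and f_mod: "\<And>m. f (m mod q) = f m"
  shows "(\<Sum>n\<in>{0..<q}. f (c * n) * e (\<alpha> / q * n)) = 0"
proof -
  define G where "G = gcd c q"
  define L where "L = q div G"
  have "G > 0" using assms(1) by (simp add: G_def)
  moreover have "G \<noteq> 1" using assms(3) by (simp add: G_def coprime_iff_gcd_eq_1)
  ultimately have "G \<ge> 2" by simp
  have q_eq: "q = G * L" by (simp add: G_def L_def)
  then have "L > 0" using \<open>G > 0\<close> assms(1) by (simp add: zero_less_mult_iff)
  have "1 * L < G * L" using \<open>G \<ge> 2\<close> \<open>L > 0\<close> by (intro mult_strict_right_mono) auto
  then have "L < q" by (simp add: q_eq)
  have "c = G * (c div G)" by (simp add: G_def)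
  then have cL: "c * L = (c div G) * q" by (metis q_eq mult.commute mult.left_commute)
  have "f (c * (n + L)) = f (c * n)" for n
  proof -
    have "c * (n + L) = c * n + (c div G) * q" by (simp add: distrib_left cL)
    then have "(c * (n + L)) mod q = (c * n) mod q" by simp
    then show ?thesis by (metis f_mod)
  qed
  then show ?thesis
    by (intro exp_sum_eq_0_if_shorter_period[OF \<open>L > 0\<close> \<open>L < q\<close> _ assms(2)]) (use q_eq in auto)
qed

lemma coprime_iff_no_common_prime_dvd:
  fixes x y :: int
  shows "coprime x y \<longleftrightarrow> (\<forall>p. prime p \<longrightarrow> p dvd y \<longrightarrow> \<not> p dvd x)"
proof
  assume "coprime x y"
  then show "\<forall>p. prime p \<longrightarrow> p dvd y \<longrightarrow> \<not> p dvd x"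
    using coprime_common_divisor not_prime_unit by blast
next
  assume no_common: "\<forall>p. prime p \<longrightarrow> p dvd y \<longrightarrow> \<not> p dvd x"
  show "coprime x y"
  proof (rule ccontr)
    assume "\<not> coprime x y"
    then have "\<bar>gcd x y\<bar> \<noteq> 1" by (simp add: coprime_iff_gcd_eq_1)
    then obtain p where "prime p" "p dvd gcd x y" by (rule prime_factor_int)
    then show False using no_common by auto
  qed
qed

lemma prime_dvd_prod_primes_iff:
  fixes A :: "'a::factorial_semiring set"
  assumes "finite A" "\<forall>p\<in>A. prime p" "prime r"
  shows "r dvd \<Prod>A \<longleftrightarrow> r \<in> A"
proof
  assume "r dvd \<Prod>A"
  then obtain p where "p \<in> A" "r dvd p" using prime_dvd_prod_iff[OF assms(1,3), of id] by auto
  then show "r \<in> A" using assms primes_dvd_imp_eq by blast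
next
  assume "r \<in> A"
  with assms(1) show "r dvd \<Prod>A" by (intro dvd_prod_eqI) simp_all
qed

lemma prod_primes_dvd:
  fixes A :: "'a::factorial_semiring_gcd set"
  assumes "finite A" "\<forall>p\<in>A. prime p" "\<forall>p\<in>A. p dvd x"
  shows "\<Prod>A dvd x"
  using assms
proof (induction A rule: finite_induct)
  case (insert p A)
  then have "coprime p (\<Prod>A)"
    using prime_dvd_prod_primes_iff[of A p] by (simp add: prime_imp_coprime)
  with insert show ?case by (simp add: divides_mult)
qed simp

lemma prod_primes_inj:
  fixes A B :: "'a::factorial_semiring set"
  assumes "finite A" "finite B" "\<forall>p\<in>A \<union> B. prime p" "\<Prod>A = \<Prod>B"
  shows "A = B"
proof (intro set_eqI iffI)
  fix p assume "p \<in> A"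
  then have "p dvd \<Prod>B" using assms prime_dvd_prod_primes_iff[of A p] by auto
  then show "p \<in> B" using \<open>p \<in> A\<close> assms prime_dvd_prod_primes_iff[of B p] by auto
next
  fix p assume "p \<in> B"
  then have "p dvd \<Prod>A" using assms prime_dvd_prod_primes_iff[of B p] by auto
  then show "p \<in> A" using \<open>p \<in> B\<close> assms prime_dvd_prod_primes_iff[of A p] by auto
qed

lemma prod_primes_pos:
  fixes A :: "int set"
  assumes "\<forall>p\<in>A. prime p"
  shows "\<Prod>A > 0"
  using assms by (intro prod_pos) (auto simp: prime_gt_0_int)

lemma s_fun_dvd: "s_fun q dvd q"
proof (cases "q = 0")
  case False
  have "finite {p. prime p \<and> p dvd q \<and> p mod 4 = 3 \<and> p \<noteq> 3}"
    by (rule finite_subset[of _ "{..q}"]) (use False in \<open>auto dest: dvd_imp_le\<close>)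
  then show ?thesis unfolding s_fun_def by (rule prod_primes_dvd) simp_all
qed simp

lemma indicator_none_eq_alternating_sum:
  fixes P :: "'a set" and R :: "'a \<Rightarrow> bool"
  assumes "finite P"
  shows "(of_bool (\<forall>p\<in>P. \<not> R p) :: 'b::comm_ring_1)
       = (\<Sum>A\<in>Pow P. (-1) ^ card A * of_bool (\<forall>p\<in>A. R p))"
proof -
  define D where "D = {p\<in>P. R p}"
  have "finite D" using assms by (simp add: D_def)
  have "(\<Sum>A\<in>Pow P. (-1) ^ card A * of_bool (\<forall>p\<in>A. R p) :: 'b)
      = (\<Sum>A\<in>Pow P. if A \<subseteq> D then (-1) ^ card A else 0)"
    by (rule sum.cong) (auto simp: D_def)
  also have "\<dots> = (\<Sum>A\<in>Pow D. (-1) ^ card A)"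
    using assms by (subst sum.inter_filter[symmetric]) (auto intro!: sum.cong simp: D_def)
  also have "\<dots> = (\<Prod>p\<in>D. 1 - 1)"
    using prod_diff_conv_sum[OF \<open>finite D\<close>, of "\<lambda>_. 1 :: 'b" "\<lambda>_. 1"] by simp
  also have "\<dots> = of_bool (D = {})" using \<open>finite D\<close> by (simp add: power_0_left card_0_eq)
  also have "D = {} \<longleftrightarrow> (\<forall>p\<in>P. \<not> R p)" by (auto simp: D_def)
  finally show ?thesis by simp
qed

definition dvd_pattern :: "int \<Rightarrow> int \<Rightarrow> int set \<Rightarrow> int set \<Rightarrow> int \<Rightarrow> bool" where
  "dvd_pattern c b A B n \<longleftrightarrow> (\<forall>p\<in>A. p dvd c * n + b) \<and> (\<forall>p\<in>B. p dvd c * n + b - 1)"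

lemma dvd_pattern_add_period:
  assumes "\<forall>p\<in>A \<union> B. p dvd c * L"
  shows "dvd_pattern c b A B (n + L) \<longleftrightarrow> dvd_pattern c b A B n"
proof -
  have "c * (n + L) + b = (c * n + b) + c * L" "c * (n + L) + b - 1 = (c * n + b - 1) + c * L"
    by (simp_all add: algebra_simps)
  then have period: "p dvd c * (n + L) + b \<longleftrightarrow> p dvd c * n + b"
    "p dvd c * (n + L) + b - 1 \<longleftrightarrow> p dvd c * n + b - 1" if "p \<in> A \<union> B" for p
    using assms that by (simp_all only: dvd_add_left_iff)
  show ?thesis unfolding dvd_pattern_def by (simp add: period)
qed

lemma not_dvd_pattern_if_common_prime:
  assumes "p \<in> A" "p \<in> B" "prime p"
  shows "\<not> dvd_pattern c b A B n"
proof
  assume "dvd_pattern c b A B n"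
  with assms(1,2) have "p dvd (c * n + b) - (c * n + b - 1)"
    unfolding dvd_pattern_def by (blast intro: dvd_diff)
  with assms(3) show False by (simp add: not_prime_unit)
qed

lemma prod_dvd_diff_if_dvd_pattern:
  assumes "finite A" "finite B" "\<forall>p\<in>A \<union> B. prime p \<and> \<not> p dvd c"
    and "dvd_pattern c b A B n" "dvd_pattern c b A B n'"
  shows "\<Prod>(A \<union> B) dvd n - n'"
proof (rule prod_primes_dvd)
  show "\<forall>p\<in>A \<union> B. p dvd n - n'"
  proof
    fix p assume p: "p \<in> A \<union> B"
    have "c * n + b - (c * n' + b) = c * (n - n')" "c * n + b - 1 - (c * n' + b - 1) = c * (n - n')"
      by (simp_all add: algebra_simps)
    with p assms(4,5) have "p dvd c * (n - n')"
      unfolding dvd_pattern_def by (metis Un_iff dvd_diff)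
    with p assms(3) show "p dvd n - n'" by (simp add: prime_dvd_mult_iff)
  qed
qed (use assms in auto)

lemma norm_exp_sum_dvd_pattern_le:
  fixes \<alpha> c b q :: int and A B :: "int set"
  assumes "q > 0" "coprime \<alpha> q" "coprime c q" "finite A" "finite B"
    and A_B_primes: "\<forall>p\<in>A \<union> B. prime p \<and> p dvd q"
  shows "norm (\<Sum>n\<in>{0..<q}. of_bool (dvd_pattern c b A B n) * e (\<alpha> / q * n))
           \<le> of_bool (A \<inter> B = {} \<and> \<Prod>(A \<union> B) = q)"
proof (cases "A \<inter> B = {}")
  case False
  then obtain p where "p \<in> A" "p \<in> B" by blast
  with A_B_primes show ?thesis by (simp add: not_dvd_pattern_if_common_prime)
next
  case True
  define L where "L = \<Prod>(A \<union> B)"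
  have "L > 0" unfolding L_def using A_B_primes by (intro prod_primes_pos) auto
  have "L dvd q" unfolding L_def using assms(4,5) A_B_primes by (intro prod_primes_dvd) auto
  have p_not_dvd_c: "\<forall>p\<in>A \<union> B. prime p \<and> \<not> p dvd c"
    using A_B_primes assms(3) coprime_iff_no_common_prime_dvd by blast
  show ?thesis
  proof (cases "L = q")
    case False
    with \<open>L dvd q\<close> assms(1) have "L < q" by (simp add: zdvd_imp_le order.not_eq_order_implies_strict)
    have "\<forall>p\<in>A \<union> B. p dvd c * L"
      unfolding L_def using assms(4,5) by (auto intro: dvd_mult dvd_prod_eqI)
    then have "(\<Sum>n\<in>{0..<q}. of_bool (dvd_pattern c b A B n) * e (\<alpha> / q * n)) = 0"
      by (intro exp_sum_eq_0_if_shorter_period[OF \<open>L > 0\<close> \<open>L < q\<close> \<open>L dvd q\<close> assms(2)])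
         (simp add: dvd_pattern_add_period)
    then show ?thesis by simp
  next
    case True
    define N where "N = {0..<q} \<inter> {n. dvd_pattern c b A B n}"
    have "\<forall>n\<in>N. \<forall>n'\<in>N. n = n'"
    proof (intro ballI)
      fix n n' assume "n \<in> N" "n' \<in> N"
      then have "\<Prod>(A \<union> B) dvd n - n'" and "\<bar>n - n'\<bar> < q"
        using prod_dvd_diff_if_dvd_pattern[OF assms(4,5) p_not_dvd_c] by (auto simp: N_def)
      show "n = n'"
      proof (rule ccontr)
        assume "n \<noteq> n'"
        moreover have "q dvd n - n'" using \<open>\<Prod>(A \<union> B) dvd n - n'\<close> True by (simp add: L_def)
        ultimately have "\<bar>q\<bar> \<le> \<bar>n - n'\<bar>" by (intro dvd_imp_le_int) simp_all
        with \<open>\<bar>n - n'\<bar> < q\<close> show False by simp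
      qed
    qed
    moreover have "finite N" by (simp add: N_def)
    ultimately have "card N \<le> 1" by (simp add: card_le_Suc0_iff_eq)
    have "norm (\<Sum>n\<in>{0..<q}. of_bool (dvd_pattern c b A B n) * e (\<alpha> / q * n))
        \<le> (\<Sum>n\<in>{0..<q}. norm (of_bool (dvd_pattern c b A B n) * e (\<alpha> / q * n)))"
      by (rule norm_sum)
    also have "\<dots> = (\<Sum>n\<in>{0..<q}. of_bool (dvd_pattern c b A B n))"
      by (intro sum.cong) (simp_all add: norm_mult)
    also have "\<dots> = card N" by (simp add: N_def)
    finally show ?thesis using \<open>card N \<le> 1\<close> \<open>A \<inter> B = {}\<close> True by (simp add: L_def)
  qed
qed

lemma card_prime_splittings_le_divisor_count:
  fixes P Q :: "int set" and q :: nat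
  assumes "q > 0" "finite P" "finite Q" "\<forall>p\<in>P \<union> Q. prime p"
  shows "card {(A, B) \<in> Pow P \<times> Pow Q. A \<inter> B = {} \<and> \<Prod>(A \<union> B) = int q} \<le> divisor_count q"
    (is "card ?K \<le> _")
proof -
  have split: "finite A" "finite B" "\<forall>p\<in>A \<union> B. prime p" "\<Prod>A * \<Prod>B = int q"
    if "(A, B) \<in> ?K" for A B
  proof -
    show "finite A" "finite B" using that assms(2,3) finite_subset by auto
    then show "\<Prod>A * \<Prod>B = int q" using that by (auto simp: prod.union_disjoint[symmetric])
    show "\<forall>p\<in>A \<union> B. prime p" using that assms(4) by auto
  qed
  have "inj_on (\<lambda>(A, B). nat (\<Prod>A)) ?K"
  proof (intro inj_onI)
    fix x y assume "x \<in> ?K" "y \<in> ?K" "(\<lambda>(A, B). nat (\<Prod>A)) x = (\<lambda>(A, B). nat (\<Prod>A)) y"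
    moreover obtain A B A' B' where "x = (A, B)" "y = (A', B')" by fastforce
    ultimately have K: "(A, B) \<in> ?K" "(A', B') \<in> ?K" and "nat (\<Prod>A) = nat (\<Prod>A')" by simp_all
    moreover have "\<Prod>A > 0" "\<Prod>A' > 0"
      using split(3)[OF K(1)] split(3)[OF K(2)] by (auto intro: prod_primes_pos)
    ultimately have "\<Prod>A = \<Prod>A'" by simp
    then have "A = A'" using split[OF K(1)] split[OF K(2)] by (intro prod_primes_inj) auto
    moreover have "\<Prod>B = \<Prod>B'"
      using split(4)[OF K(1)] split(4)[OF K(2)] \<open>\<Prod>A = \<Prod>A'\<close> \<open>\<Prod>A > 0\<close>
      by (metis mult_left_cancel order_less_irrefl)
    then have "B = B'" using split[OF K(1)] split[OF K(2)] by (intro prod_primes_inj) auto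
    ultimately show "x = y" using \<open>x = (A, B)\<close> \<open>y = (A', B')\<close> by simp
  qed
  moreover have "(\<lambda>(A, B). nat (\<Prod>A)) ` ?K \<subseteq> {d. d dvd q}"
  proof
    fix d assume "d \<in> (\<lambda>(A, B). nat (\<Prod>A)) ` ?K"
    then obtain A B where K: "(A, B) \<in> ?K" and d: "d = nat (\<Prod>A)" by auto
    have "\<Prod>A dvd int q" using split(4)[OF K] by (metis dvd_triv_left)
    moreover have "\<Prod>A > 0" using split(3)[OF K] by (auto intro: prod_primes_pos)
    ultimately show "d \<in> {d. d dvd q}" using d by (simp add: nat_dvd_iff)
  qed
  moreover have "finite {d. d dvd q}" using assms(1) by simp
  ultimately show ?thesis unfolding divisor_count_def by (rule card_inj_on_le)
qed

lemma of_bool_sieve_eq_sum_dvd_pattern: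
  assumes "finite P" "finite Q"
  shows "(of_bool ((\<forall>p\<in>P. \<not> p dvd c * n + b) \<and> (\<forall>p\<in>Q. \<not> p dvd c * n + b - 1)) :: 'a::comm_ring_1)
       = (\<Sum>A\<in>Pow P. \<Sum>B\<in>Pow Q. (-1) ^ (card A + card B) * of_bool (dvd_pattern c b A B n))"
proof -
  have "(of_bool ((\<forall>p\<in>P. \<not> p dvd c * n + b) \<and> (\<forall>p\<in>Q. \<not> p dvd c * n + b - 1)) :: 'a)
      = of_bool (\<forall>p\<in>P. \<not> p dvd c * n + b) * of_bool (\<forall>p\<in>Q. \<not> p dvd c * n + b - 1)"
    by simp
  also have "\<dots> = (\<Sum>A\<in>Pow P. (-1) ^ card A * of_bool (\<forall>p\<in>A. p dvd c * n + b))
                 * (\<Sum>B\<in>Pow Q. (-1) ^ card B * of_bool (\<forall>p\<in>B. p dvd c * n + b - 1))"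
    by (simp only: indicator_none_eq_alternating_sum[OF assms(1)]
        indicator_none_eq_alternating_sum[OF assms(2)])
  also have "\<dots> = (\<Sum>A\<in>Pow P. \<Sum>B\<in>Pow Q. (-1) ^ (card A + card B) * of_bool (dvd_pattern c b A B n))"
    by (simp add: sum_product power_add dvd_pattern_def of_bool_conj mult_ac)
  finally show ?thesis .
qed

lemma norm_exp_sum_sieve_le_divisor_count:
  fixes \<alpha> c b :: int and q :: nat and P Q :: "int set"
  assumes "q > 0" "coprime \<alpha> (int q)" "coprime c (int q)"
    and P_Q_primes: "\<forall>p\<in>P \<union> Q. prime p \<and> p dvd int q"
  shows "norm (\<Sum>n\<in>{0..<int q}.
           of_bool ((\<forall>p\<in>P. \<not> p dvd c * n + b) \<and> (\<forall>p\<in>Q. \<not> p dvd c * n + b - 1)) * e (\<alpha> / q * n))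
         \<le> divisor_count q"
proof -
  define E where "E n = e (\<alpha> / q * n)" for n :: int
  define \<sigma> where "\<sigma> A B = ((-1) ^ (card A + card B) :: complex)" for A B :: "int set"
  define T where "T A B = (\<Sum>n\<in>{0..<int q}. of_bool (dvd_pattern c b A B n) * E n)" for A B
  have "p \<in> {0..int q}" if "p \<in> P \<union> Q" for p
    using P_Q_primes that assms(1) by (simp add: zdvd_imp_le prime_ge_0_int)
  then have "finite P" "finite Q" by (auto intro: finite_subset[of _ "{0..int q}"])
  note sieve = of_bool_sieve_eq_sum_dvd_pattern[OF \<open>finite P\<close> \<open>finite Q\<close>, where 'a = complex]
  have "(\<Sum>n\<in>{0..<int q}.
          of_bool ((\<forall>p\<in>P. \<not> p dvd c * n + b) \<and> (\<forall>p\<in>Q. \<not> p dvd c * n + b - 1)) * E n)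
      = (\<Sum>n\<in>{0..<int q}. \<Sum>A\<in>Pow P. \<Sum>B\<in>Pow Q. \<sigma> A B * (of_bool (dvd_pattern c b A B n) * E n))"
    by (simp only: sieve \<sigma>_def sum_distrib_right mult.assoc)
  also have "\<dots> = (\<Sum>A\<in>Pow P. \<Sum>B\<in>Pow Q. \<Sum>n\<in>{0..<int q}. \<sigma> A B * (of_bool (dvd_pattern c b A B n) * E n))"
    by (subst sum.swap) (intro sum.cong refl sum.swap)
  also have "\<dots> = (\<Sum>A\<in>Pow P. \<Sum>B\<in>Pow Q. \<sigma> A B * T A B)"
    by (simp only: T_def sum_distrib_left)
  also have "norm \<dots> \<le> (\<Sum>A\<in>Pow P. \<Sum>B\<in>Pow Q. norm (T A B))"
    by (rule order.trans[OF norm_sum sum_mono[OF order.trans[OF norm_sum]]])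
       (simp add: \<sigma>_def norm_mult norm_power)
  also have "\<dots> \<le> (\<Sum>A\<in>Pow P. \<Sum>B\<in>Pow Q. of_bool (A \<inter> B = {} \<and> \<Prod>(A \<union> B) = int q))"
  proof (intro sum_mono)
    fix A B assume "A \<in> Pow P" "B \<in> Pow Q"
    then have "finite A" "finite B" "\<forall>p\<in>A \<union> B. prime p \<and> p dvd int q"
      using \<open>finite P\<close> \<open>finite Q\<close> P_Q_primes by (auto intro: finite_subset)
    then show "norm (T A B) \<le> of_bool (A \<inter> B = {} \<and> \<Prod>(A \<union> B) = int q)"
      using norm_exp_sum_dvd_pattern_le[of "int q" \<alpha> c A B b] assms by (simp add: T_def E_def)
  qed
  also have "\<dots> = (\<Sum>(A, B)\<in>Pow P \<times> Pow Q. of_bool (A \<inter> B = {} \<and> \<Prod>(A \<union> B) = int q))"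
    by (rule sum.cartesian_product)
  also have "\<dots> = card {(A, B) \<in> Pow P \<times> Pow Q. A \<inter> B = {} \<and> \<Prod>(A \<union> B) = int q}"
  proof -
    have "(Pow P \<times> Pow Q) \<inter> {x. case x of (A, B) \<Rightarrow> A \<inter> B = {} \<and> \<Prod>(A \<union> B) = int q}
        = {(A, B) \<in> Pow P \<times> Pow Q. A \<inter> B = {} \<and> \<Prod>(A \<union> B) = int q}" by auto
    with \<open>finite P\<close> \<open>finite Q\<close> show ?thesis
      by (simp only: sum_of_bool_eq finite_cartesian_product finite_Pow_iff case_prod_beta')
  qed
  also have "\<dots> \<le> divisor_count q"
    using card_prime_splittings_le_divisor_count[OF assms(1) \<open>finite P\<close> \<open>finite Q\<close>] P_Q_primes
    by simp
  finally show ?thesis by (simp add: E_def)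
qed

lemma sum_filter_eq_sum_of_bool:
  fixes f :: "'a \<Rightarrow> 'b::semiring_1"
  assumes "finite A"
  shows "(\<Sum>x\<in>{x\<in>A. P x}. f x) = (\<Sum>x\<in>A. of_bool (P x) * f x)"
  unfolding sum.inter_filter[OF assms] by (rule sum.cong) simp_all

lemma coprime_mod_add_iff:
  fixes m k d q :: int
  assumes "d dvd q" "q \<noteq> 0"
  shows "coprime (m mod q + k) d \<longleftrightarrow> coprime (m + k) d"
proof -
  have "d \<noteq> 0" using assms by auto
  have "(m mod q + k) mod d = (m + k) mod d"
    using assms(1) by (intro mod_add_cong) (simp_all add: mod_mod_cancel)
  then show ?thesis by (metis coprime_mod_left_iff \<open>d \<noteq> 0\<close>)
qed

theorem lemma5:
  fixes a :: int and q :: nat and J :: nat and w :: nat and V :: nat and b :: int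
    and U W :: int
  assumes "a > 0" and "q > 0" and "q \<noteq> 1" and "coprime a (int q)"
    and "U = 2^J * 3^3" and "J \<ge> 5"
    and "W = U * (\<Prod>p\<in>{p. prime p \<and> 5 \<le> p \<and> p \<le> w}. int p)"
    and "w \<ge> 10^(10^10)"
    and "amenable W b"
    and "V \<ge> 1" and "coprime q V"
  shows "norm (\<Sum>n\<in>{n\<in>{0..<int q}. coprime (W * int V * n + b) (int q)
                 \<and> coprime (W * int V * n + b - 1) (int (s_fun q))}.
              e (real_of_int a / real q * real_of_int n))
         \<le> real (divisor_count q) * (if coprime (int q) W then 1 else 0)"
proof -
  define s where "s = int (s_fun q)"
  define good where "good m \<longleftrightarrow> coprime (m + b) (int q) \<and> coprime (m + b - 1) s" for m
  have "s dvd int q" by (simp add: s_def s_fun_dvd)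
  let "norm ?S \<le> _" = ?thesis
  have S_eq: "?S = (\<Sum>n\<in>{0..<int q}. of_bool (good (W * int V * n)) * e (a / q * n))"
    unfolding sum_filter_eq_sum_of_bool[OF finite_atLeastLessThan_int] by (simp add: good_def s_def)
  show ?thesis
  proof (cases "coprime (int q) W")
    case False
    then have "\<not> coprime (W * int V) (int q)" by (simp add: coprime_commute)
    moreover have "good (m mod int q) \<longleftrightarrow> good m" for m
      using coprime_mod_add_iff[of "int q" "int q" m b] coprime_mod_add_iff[OF \<open>s dvd int q\<close>, of m "b - 1"]
        assms(2) by (simp only: good_def add_diff_eq of_nat_eq_0_iff dvd_refl)
    ultimately have "(\<Sum>n\<in>{0..<int q}. of_bool (good (W * int V * n)) * e (a / q * n)) = 0"
      using exp_sum_eq_0_if_not_coprime[of "int q" a "W * int V" "\<lambda>m. of_bool (good m)"] assms(2,4)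
      by simp
    with False show ?thesis by (simp only: S_eq) simp
  next
    case True
    define P where "P = {p. prime p \<and> p dvd int q}"
    define Q where "Q = {p. prime p \<and> p dvd s}"
    have "coprime (W * int V) (int q)" using True assms(11) by (simp add: coprime_commute)
    moreover have "\<forall>p\<in>P \<union> Q. prime p \<and> p dvd int q"
      using \<open>s dvd int q\<close> by (auto simp: P_def Q_def intro: dvd_trans)
    moreover have "good m \<longleftrightarrow> (\<forall>p\<in>P. \<not> p dvd m + b) \<and> (\<forall>p\<in>Q. \<not> p dvd m + b - 1)"
      for m
      by (auto simp: good_def P_def Q_def coprime_iff_no_common_prime_dvd)
    ultimately show ?thesis
      using norm_exp_sum_sieve_le_divisor_count[OF assms(2,4), of "W * int V" P Q b] True
      by (simp only: S_eq) simp
  qed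
qed

end
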